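(* Let $G=(V=V_1\sqcup V_2,E)$ be a turn-based game with $n$ vertices and reward function $r\colon E\to\mathbb{Z}$, let $W=\max_{e\in E}|r(e)|\ge1$, let $v\in V$, and let $(\sigma_1,\tau_1)$, $(\sigma_2,\tau_2)$ be two positional strategy profiles. Set \[\lambda_0=1-\left(24W(2n+1)^{7W^{1/4}\sqrt{n}+6}\right)^{-1}.\] If $\mathrm{Disc}_{\lambda_0}(G_v^{\sigma_1,\tau_1})\ge\mathrm{Disc}_{\lambda_0}(G_v^{\sigma_2,\tau_2})$, then for all $\lambda\in[\lambda_0,1)$ we have $\mathrm{Disc}_{\lambda}(G_v^{\sigma_1,\tau_1})\ge\mathrm{Disc}_{\lambda}(G_v^{\sigma_2,\tau_2})$.
   Context: A turn-based game is a finite directed graph whose vertices are partitioned into player-1 vertices $V_1$ and player-2 vertices $V_2$, each vertex having at least one outgoing edge. A positional strategy for player 1 (resp. 2) is a map $\sigma\colon V_1\to V$ (resp. $\tau\colon V_2\to V$) choosing a successor of each vertex. A profile $(\sigma,\tau)$ and a start vertex $v$ determine the unique play $G_v^{\sigma,\tau}=\langle v_0=v,v_1,\dots\rangle$ in which each vertex's successor is chosen by its owner's strategy. For $\lambda\in[0,1)$, $\mathrm{Disc}_\lambda(\langle v_0,v_1,\dots\rangle)=\sum_{i\ge0}\lambda^i r(v_i,v_{i+1})$. *)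

theory Defs
  imports Complex_Main
begin

definition turn_game :: "'v set \<Rightarrow> 'v set \<Rightarrow> 'v set \<Rightarrow> ('v \<times> 'v) set \<Rightarrow> bool" where
  "turn_game V V1 V2 E \<longleftrightarrow> finite V \<and> V1 \<union> V2 = V \<and> V1 \<inter> V2 = {} \<and>
     E \<subseteq> V \<times> V \<and> (\<forall>x\<in>V. \<exists>y. (x, y) \<in> E)"

text \<open>Positional strategy of the owner of the vertex set Vi: chooses a successor
  along an edge at each vertex of Vi (values outside Vi are irrelevant).\<close>
definition positional_strategy :: "('v \<times> 'v) set \<Rightarrow> 'v set \<Rightarrow> ('v \<Rightarrow> 'v) \<Rightarrow> bool" where
  "positional_strategy E Vi s \<longleftrightarrow> (\<forall>x\<in>Vi. (x, s x) \<in> E)"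

definition play :: "'v set \<Rightarrow> ('v \<Rightarrow> 'v) \<Rightarrow> ('v \<Rightarrow> 'v) \<Rightarrow> 'v \<Rightarrow> nat \<Rightarrow> 'v" where
  "play V1 \<sigma> \<tau> v i = ((\<lambda>x. if x \<in> V1 then \<sigma> x else \<tau> x) ^^ i) v"

definition Disc :: "real \<Rightarrow> ('v \<times> 'v \<Rightarrow> int) \<Rightarrow> (nat \<Rightarrow> 'v) \<Rightarrow> real" where
  "Disc l r p = (\<Sum>i. l ^ i * real_of_int (r (p i, p (Suc i))))"

end

theory Submission
  imports Defs "HOL-Complex_Analysis.Conformal_Mappings"
begin

(* Both plays are lassos with stem plus cycle of length at most n, so after multiplying
   Disc_l(p1) - Disc_l(p2) by the positive factor (1 - l^b1) (1 - l^b2) one obtains a polynomial P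
   in l of degree < 2n with integer coefficients bounded by 8W. Near 1 the sign of P is that of the
   first nonvanishing term of its Taylor expansion at 1, of order k say, as long as 1 - l stays below
   a threshold decaying exponentially in k. A Borwein-Erdelyi-Kos type maximum modulus argument
   bounds k by 14 W^(1/4) sqrt n + 9, and for such k the threshold is at least 1 - lam0. Hence P,
   and with it the difference of the discounted payoffs, has constant sign on [lam0, 1). *)

section \<open>Integer polynomials and their Taylor coefficients at 1\<close>

definition ipoly :: "(nat \<Rightarrow> int) \<Rightarrow> nat \<Rightarrow> 'a::comm_ring_1 \<Rightarrow> 'a" where
  "ipoly q N x = (\<Sum>i<N. of_int (q i) * x ^ i)"

definition coeff_at_one :: "(nat \<Rightarrow> int) \<Rightarrow> nat \<Rightarrow> nat \<Rightarrow> int" where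
  "coeff_at_one q N j = (\<Sum>i<N. q i * int (i choose j))"

lemma power_eq_binomial_sum_at_one:
  fixes x :: "'a::comm_ring_1"
  assumes "i < N"
  shows "x ^ i = (\<Sum>j<N. of_nat (i choose j) * (x - 1) ^ j)"
proof -
  have "x ^ i = ((x - 1) + 1) ^ i" by simp
  also have "\<dots> = (\<Sum>j\<le>i. of_nat (i choose j) * (x - 1) ^ j)"
    by (simp only: binomial_ring) simp
  also have "\<dots> = (\<Sum>j<N. of_nat (i choose j) * (x - 1) ^ j)"
    by (rule sum.mono_neutral_left) (use assms in \<open>auto simp: binomial_eq_0 not_le\<close>)
  finally show ?thesis .
qed

lemma ipoly_eq_ipoly_coeff_at_one: "ipoly q N x = ipoly (coeff_at_one q N) N (x - 1)"
proof -
  have "ipoly q N x = (\<Sum>i<N. \<Sum>j<N. of_int (q i) * (of_nat (i choose j) * (x - 1) ^ j))"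
    unfolding ipoly_def
    by (intro sum.cong refl) (simp add: power_eq_binomial_sum_at_one sum_distrib_left)
  also have "\<dots> = (\<Sum>j<N. \<Sum>i<N. of_int (q i) * (of_nat (i choose j) * (x - 1) ^ j))"
    by (rule sum.swap)
  also have "\<dots> = ipoly (coeff_at_one q N) N (x - 1)"
    by (simp add: ipoly_def coeff_at_one_def sum_distrib_right mult.assoc)
  finally show ?thesis .
qed

lemma sum_abs_coeff_at_one_le:
  fixes s :: real
  assumes "0 \<le> s"
  shows "(\<Sum>j<N. \<bar>of_int (coeff_at_one q N j)\<bar> * s ^ j) \<le> (\<Sum>i<N. \<bar>of_int (q i)\<bar> * (1 + s) ^ i)"
proof -
  have "(\<Sum>j<N. \<bar>of_int (coeff_at_one q N j)\<bar> * s ^ j)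
      \<le> (\<Sum>j<N. (\<Sum>i<N. \<bar>real_of_int (q i)\<bar> * real (i choose j)) * s ^ j)"
  proof (intro sum_mono mult_right_mono)
    fix j
    have "\<bar>real_of_int (coeff_at_one q N j)\<bar> = \<bar>\<Sum>i<N. real_of_int (q i) * real (i choose j)\<bar>"
      by (simp add: coeff_at_one_def)
    also have "\<dots> \<le> (\<Sum>i<N. \<bar>real_of_int (q i)\<bar> * real (i choose j))"
      by (rule order_trans[OF sum_abs]) (simp add: abs_mult)
    finally show "\<bar>real_of_int (coeff_at_one q N j)\<bar> \<le> (\<Sum>i<N. \<bar>real_of_int (q i)\<bar> * real (i choose j))" .
  qed (use assms in auto)
  also have "\<dots> = (\<Sum>i<N. \<bar>real_of_int (q i)\<bar> * (\<Sum>j<N. real (i choose j) * s ^ j))"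
    by (simp add: sum_distrib_left sum_distrib_right mult.assoc) (rule sum.swap)
  also have "\<dots> = (\<Sum>i<N. \<bar>real_of_int (q i)\<bar> * (1 + s) ^ i)"
    by (intro sum.cong refl) (simp add: power_eq_binomial_sum_at_one[of _ N "1 + s"])
  finally show ?thesis .
qed

lemma coeff_at_one_eq_0: "N \<le> j \<Longrightarrow> coeff_at_one q N j = 0"
  by (auto simp: coeff_at_one_def binomial_eq_0 intro!: sum.neutral)

text \<open>The top nonzero coefficient of the polynomial is also its top Taylor coefficient at 1.\<close>
lemma exists_coeff_at_one_nonzero:
  assumes "i < N" "q i \<noteq> 0"
  shows "\<exists>j<N. coeff_at_one q N j \<noteq> 0"
proof -
  define A where "A = {i. i < N \<and> q i \<noteq> 0}"
  define m where "m = Max A"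
  have "finite A" "A \<noteq> {}" using assms by (auto simp: A_def)
  then have m: "m \<in> A" "\<And>i. i \<in> A \<Longrightarrow> i \<le> m" by (simp_all add: m_def)
  have "coeff_at_one q N m = (\<Sum>i\<in>{m}. q i * int (i choose m))"
    unfolding coeff_at_one_def
  proof (rule sum.mono_neutral_right)
    show "\<forall>i\<in>{..<N} - {m}. q i * int (i choose m) = 0"
    proof
      fix i assume i: "i \<in> {..<N} - {m}"
      show "q i * int (i choose m) = 0"
      proof (cases "i < m")
        case False
        then have "i \<notin> A" using i m(2) by force
        then show ?thesis using i by (simp add: A_def)
      qed simp
    qed
  qed (use m in \<open>auto simp: A_def\<close>)
  then show ?thesis using m(1) by (auto simp: A_def)
qed

lemma norm_ipoly_le_geometric:
  fixes z :: complex
  assumes "norm z < 1" "\<forall>i. \<bar>of_int (q i)\<bar> \<le> H"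
  shows "norm (ipoly q N z) \<le> H / (1 - norm z)"
proof -
  have H: "0 \<le> H" using assms(2) by (metis abs_ge_zero order_trans)
  have "norm (ipoly q N z) \<le> (\<Sum>i<N. norm (of_int (q i) * z ^ i))"
    unfolding ipoly_def by (rule norm_sum)
  also have "\<dots> \<le> (\<Sum>i<N. H * norm z ^ i)"
    using assms by (intro sum_mono) (auto simp: norm_mult norm_power intro!: mult_right_mono)
  also have "\<dots> = H * (\<Sum>i<N. norm z ^ i)" by (simp add: sum_distrib_left)
  also have "\<dots> = H * ((1 - norm z ^ N) / (1 - norm z))"
    using assms by (simp add: sum_gp_strict)
  also have "\<dots> \<le> H * (1 / (1 - norm z))"
    using assms H by (intro mult_left_mono divide_right_mono) auto
  finally show ?thesis by simp
qed

lemma norm_ipoly_near_one_le: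
  fixes z :: complex
  assumes \<sigma>: "0 < \<sigma>" and z: "norm (z - 1) \<le> \<sigma>" and vanish: "\<forall>j<k. coeff_at_one q N j = 0"
  shows "norm (ipoly q N z) \<le> (norm (z - 1) / \<sigma>) ^ k * (\<Sum>i<N. \<bar>of_int (q i)\<bar> * (1 + \<sigma>) ^ i)"
proof -
  define \<rho> where "\<rho> = norm (z - 1) / \<sigma>"
  define m where "m j = \<bar>real_of_int (coeff_at_one q N j)\<bar>" for j
  have \<rho>: "0 \<le> \<rho>" "\<rho> \<le> 1" using \<sigma> z by (auto simp: \<rho>_def)
  have "norm (ipoly q N z) \<le> (\<Sum>j<N. norm (of_int (coeff_at_one q N j) * (z - 1) ^ j))"
    unfolding ipoly_eq_ipoly_coeff_at_one[of q N z] unfolding ipoly_def by (rule norm_sum)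
  also have "\<dots> = (\<Sum>j<N. m j * (\<rho> * \<sigma>) ^ j)"
    using \<sigma> by (simp add: norm_mult norm_power m_def \<rho>_def)
  also have "\<dots> \<le> (\<Sum>j<N. \<rho> ^ k * (m j * \<sigma> ^ j))"
  proof (intro sum_mono)
    fix j
    show "m j * (\<rho> * \<sigma>) ^ j \<le> \<rho> ^ k * (m j * \<sigma> ^ j)"
    proof (cases "j < k")
      case False
      then have "\<rho> ^ j \<le> \<rho> ^ k" using \<rho> by (intro power_decreasing) auto
      then show ?thesis
        using \<sigma> by (simp add: power_mult_distrib m_def mult_left_mono mult_right_mono mult.left_commute)
    qed (use vanish in \<open>simp add: m_def\<close>)
  qed
  also have "\<dots> \<le> \<rho> ^ k * (\<Sum>i<N. \<bar>of_int (q i)\<bar> * (1 + \<sigma>) ^ i)"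
    unfolding sum_distrib_left[symmetric] m_def
    using \<sigma> \<rho> by (intro mult_left_mono sum_abs_coeff_at_one_le) auto
  finally show ?thesis by (simp add: \<rho>_def)
qed

section \<open>Multiplicity of the root 1 of a polynomial with bounded coefficients\<close>

text \<open>The map \<open>w \<mapsto> 4w/(5 - w)\<close> sends the closed unit disc into itself and meets the unit
  circle only at 1, where \<open>1 - |z|\<close> is of order \<open>|1 - w|\<^sup>2\<close>; the factor \<open>(1 - w)\<^sup>2\<close>
  therefore absorbs the blow-up of the coefficient bound \<open>H / (1 - |z|)\<close>.\<close>
definition moebius_poly :: "(nat \<Rightarrow> int) \<Rightarrow> nat \<Rightarrow> complex \<Rightarrow> complex" where
  "moebius_poly q N w = ipoly q N (4 * w / (5 - w)) * (1 - w)\<^sup>2"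

lemma norm_five_minus_unimodular:
  fixes w :: complex
  assumes "norm w = 1"
  shows "(norm (5 - w))\<^sup>2 - 16 = 5 * (norm (1 - w))\<^sup>2"
proof -
  have "(Re w)\<^sup>2 + (Im w)\<^sup>2 = 1" using assms by (metis cmod_power2 one_power2)
  moreover have "(norm (5 - w))\<^sup>2 = (Re (5 - w))\<^sup>2 + (Im (5 - w))\<^sup>2" by (rule cmod_power2)
  moreover have "(norm (1 - w))\<^sup>2 = (Re (1 - w))\<^sup>2 + (Im (1 - w))\<^sup>2" by (rule cmod_power2)
  ultimately show ?thesis by (simp add: power2_eq_square algebra_simps)
qed

lemma norm_moebius_poly_le:
  assumes w: "norm w = 1" and H: "\<forall>i. \<bar>of_int (q i)\<bar> \<le> H"
  shows "norm (moebius_poly q N w) \<le> 12 * H"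
proof (cases "w = 1")
  case True
  then show ?thesis using H by (simp add: moebius_poly_def) (metis abs_ge_zero order_trans)
next
  case False
  have H0: "0 \<le> H" using H by (metis abs_ge_zero order_trans)
  define d where "d = norm (5 - w)"
  define e where "e = norm (1 - w)"
  have de: "d\<^sup>2 - 16 = 5 * e\<^sup>2" using norm_five_minus_unimodular[OF w] by (simp add: d_def e_def)
  have "0 < e\<^sup>2" using False by (simp add: e_def)
  then have "4\<^sup>2 < d\<^sup>2" using de by (simp add: algebra_simps)
  then have d4: "4 < d" by (rule power_less_imp_less_base) (simp add: d_def)
  have d6: "d \<le> 6" using norm_triangle_ineq4[of 5 w] w by (simp add: d_def)
  have "norm (4 * w / (5 - w)) = 4 / d" using w by (simp add: d_def norm_divide norm_mult)
  then have "norm (ipoly q N (4 * w / (5 - w))) \<le> H / (1 - 4 / d)"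
    using norm_ipoly_le_geometric[OF _ H, of "4 * w / (5 - w)"] d4 by simp
  also have "\<dots> = H * d / (d - 4)" using d4 by (simp add: field_simps)
  finally have "norm (moebius_poly q N w) \<le> H * d / (d - 4) * e\<^sup>2"
    unfolding moebius_poly_def norm_mult norm_power e_def
    by (rule mult_right_mono) simp
  also have "\<dots> = H * d * (d + 4) / 5"
  proof -
    have e: "e\<^sup>2 = (d - 4) * (d + 4) / 5" using de by (simp add: algebra_simps power2_eq_square)
    have "H * d / (d - 4) * ((d - 4) * (d + 4) / 5) = H * d * (d + 4) / 5"
      using d4 by (simp add: field_simps)
    then show ?thesis by (simp only: e)
  qed
  also have "\<dots> \<le> H * 6 * 10 / 5"
    using H0 d6 d4 by (intro divide_right_mono mult_mono) auto
  finally show ?thesis by simp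
qed

lemma norm_moebius_poly_near_one_le:
  assumes w: "norm w = 1" and \<sigma>: "0 < \<sigma>" "\<sigma> \<le> 1"
    and near: "norm (1 - w) \<le> 4 * \<sigma> / 5" and vanish: "\<forall>j<k. coeff_at_one q N j = 0"
  shows "norm (moebius_poly q N w)
     \<le> (\<Sum>i<N. \<bar>of_int (q i)\<bar> * (1 + \<sigma>) ^ i) * (norm (1 - w) / (4 * \<sigma> / 5)) ^ k"
proof -
  define e where "e = norm (1 - w)"
  define C where "C = (\<Sum>i<N. \<bar>real_of_int (q i)\<bar> * (1 + \<sigma>) ^ i)"
  define z where "z = 4 * w / (5 - w)"
  have C0: "0 \<le> C" unfolding C_def using \<sigma> by (intro sum_nonneg) auto
  have d4: "4 \<le> norm (5 - w)" using norm_triangle_ineq2[of 5 w] w by simp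
  then have "5 - w \<noteq> 0" by auto
  then have "z - 1 = 5 * (w - 1) / (5 - w)" by (simp add: z_def field_simps)
  then have "norm (z - 1) = 5 * e / norm (5 - w)"
    by (simp only: norm_divide norm_mult e_def norm_minus_commute) simp
  also have "\<dots> \<le> 5 * e / 4" using d4 by (intro divide_left_mono) (auto simp: e_def)
  finally have z: "norm (z - 1) / \<sigma> \<le> e / (4 * \<sigma> / 5)" using \<sigma> by (simp add: field_simps)
  have "norm (ipoly q N z) \<le> (norm (z - 1) / \<sigma>) ^ k * C"
    using norm_ipoly_near_one_le[OF \<sigma>(1) _ vanish] z near \<sigma> by (simp add: C_def e_def field_simps)
  also have "\<dots> \<le> (e / (4 * \<sigma> / 5)) ^ k * C"
    using z \<sigma> C0 by (intro mult_right_mono power_mono) auto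
  finally have P: "norm (ipoly q N z) \<le> C * (e / (4 * \<sigma> / 5)) ^ k" by (simp add: mult.commute)
  have "e\<^sup>2 \<le> 1" using near \<sigma> by (simp add: e_def power_le_one)
  then have "norm (moebius_poly q N w) \<le> norm (ipoly q N z)"
    by (simp add: moebius_poly_def norm_mult norm_power z_def e_def mult_left_le)
  then show ?thesis using P by (simp add: C_def e_def)
qed

lemma moebius_poly_0: "0 < N \<Longrightarrow> moebius_poly q N 0 = of_int (q 0)"
  by (simp add: moebius_poly_def ipoly_def sum.lessThan_Suc_shift gr0_conv_Suc)

lemma norm_one_minus_cis_le: "norm (1 - cis x) \<le> \<bar>x\<bar>"
proof -
  have "(norm (1 - cis x))\<^sup>2 = (1 - cos x)\<^sup>2 + (sin x)\<^sup>2" by (simp add: cmod_power2)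
  also have "\<dots> = (2 * sin (x / 2))\<^sup>2"
    using sin_cos_squared_add[of x] cos_double_sin[of "x / 2"] by (simp add: power2_eq_square algebra_simps)
  finally have "norm (1 - cis x) = \<bar>2 * sin (x / 2)\<bar>"
    by (metis abs_of_nonneg norm_ge_zero power2_abs power2_eq_iff_nonneg abs_ge_zero)
  also have "\<dots> \<le> 2 * \<bar>x / 2\<bar>" using abs_sin_x_le_abs_x[of "x / 2"] by (simp add: abs_mult)
  finally show ?thesis by simp
qed

lemma prod_roots_of_unity_rotate:
  fixes F :: "complex \<Rightarrow> 'a::comm_monoid_mult" and L m :: nat
  assumes L: "0 < L"
  shows "(\<Prod>j<L. F (cis (2*pi*j/L) * (cis (2*pi*m/L) * w))) = (\<Prod>j<L. F (cis (2*pi*j/L) * w))"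
proof (induction m)
  case (Suc m)
  define f where "f j = F (cis (2*pi*j/L) * (cis (2*pi*m/L) * w))" for j :: nat
  have "cis (2*pi*j/L) * (cis (2*pi*Suc m/L) * w) = cis (2*pi*Suc j/L) * (cis (2*pi*m/L) * w)" for j :: nat
  proof -
    have "2*pi*j/L + 2*pi*Suc m/L = 2*pi*Suc j/L + 2*pi*m/L"
      by (simp only: add_divide_distrib[symmetric]) (simp add: algebra_simps)
    then show ?thesis by (simp only: mult.assoc[symmetric] cis_mult)
  qed
  then have "(\<Prod>j<L. F (cis (2*pi*j/L) * (cis (2*pi*Suc m/L) * w))) = (\<Prod>j<L. f (Suc j))"
    by (simp only: f_def)
  also have "\<dots> = (\<Prod>j<L. f j)"
  proof -
    obtain l where l: "L = Suc l" using L by (cases L) auto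
    have "(\<Prod>j<L. f (Suc j)) = (\<Prod>j<l. f (Suc j)) * f L" by (simp add: l)
    also have "f L = f 0" using L by (simp add: f_def)
    also have "(\<Prod>j<l. f (Suc j)) * f 0 = f 0 * (\<Prod>j<l. f (Suc j))" by (rule mult.commute)
    also have "\<dots> = (\<Prod>j<L. f j)" unfolding l by (rule prod.lessThan_Suc_shift[symmetric])
    finally show ?thesis .
  qed
  finally show ?case by (simp only: f_def Suc.IH)
qed simp

lemma exists_rotation_into_arc:
  fixes L :: nat
  assumes w: "norm w = 1" and L: "0 < L"
  obtains m :: nat and t where "0 \<le> t" "t < 2*pi/L" "cis (2*pi*m/L) * w = cis t"
proof -
  obtain \<theta> where \<theta>: "0 \<le> \<theta>" "\<theta> < 2*pi" "w = cis \<theta>"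
    using complex_unimodular_polar[OF w] by (auto simp: cis.ctr)
  define x where "x = \<theta> * L / (2*pi)"
  define m where "m = nat \<lfloor>x\<rfloor>"
  define t where "t = \<theta> - 2*pi*m/L"
  have x: "0 \<le> x" "x < L" using \<theta> L by (simp_all add: x_def field_simps)
  then have m: "real m \<le> x" "x < real m + 1" "m < L"
    by (simp_all add: m_def nat_less_iff floor_less_iff)
  have \<theta>x: "\<theta> = 2*pi*x/L" using L by (simp add: x_def)
  have t: "t = 2*pi*(x - m)/L" by (simp add: t_def \<theta>x diff_divide_distrib right_diff_distrib)
  have "0 \<le> t" "t < 2*pi/L"
    using m L unfolding t by (auto intro!: divide_strict_right_mono)
  moreover have "2*pi*real (L - m)/L + \<theta> = t + 2*pi"
    using m L by (simp add: t_def of_nat_diff field_simps)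
  then have "cis (2*pi*real (L - m)/L) * w = cis t"
    by (metis \<theta>(3) cis_mult cis_2pi mult.right_neutral)
  ultimately show thesis by (rule that)
qed

lemma prod_rotations_eq_arc:
  fixes F :: "complex \<Rightarrow> 'a::comm_monoid_mult" and L :: nat
  assumes w: "norm w = 1" and L: "0 < L"
  obtains t where "0 \<le> t" "t < 2*pi/L"
    "(\<Prod>j<L. F (cis (2*pi*j/L) * w)) = (\<Prod>j<L. F (cis (t + 2*pi*j/L)))"
proof -
  obtain m :: nat and t where t: "0 \<le> t" "t < 2*pi/L" and m: "cis (2*pi*m/L) * w = cis t"
    using exists_rotation_into_arc[OF w L] .
  have "(\<Prod>j<L. F (cis (2*pi*j/L) * w)) = (\<Prod>j<L. F (cis (2*pi*j/L) * cis t))"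
    using prod_roots_of_unity_rotate[OF L, of F m w] m by simp
  also have "\<dots> = (\<Prod>j<L. F (cis (t + 2*pi*j/L)))" by (simp add: cis_mult add.commute)
  finally show thesis using t that by blast
qed

lemma norm_cis_near_one_le:
  assumes F_near: "\<And>w. norm w = 1 \<Longrightarrow> norm (1 - w) \<le> \<beta> \<Longrightarrow> norm (F w) \<le> C * (norm (1 - w) / \<beta>) ^ k"
    and C: "0 \<le> C" and \<beta>: "0 < \<beta>" and x: "\<bar>x\<bar> \<le> a" "a \<le> \<beta>"
  shows "norm (F (cis x)) \<le> C * (a / \<beta>) ^ k"
proof -
  have a: "norm (1 - cis x) \<le> a" using x norm_one_minus_cis_le[of x] by linarith
  then have "norm (F (cis x)) \<le> C * (norm (1 - cis x) / \<beta>) ^ k" using x by (intro F_near) auto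
  also have "\<dots> \<le> C * (a / \<beta>) ^ k"
    using a \<beta> C by (intro mult_left_mono power_mono divide_right_mono) auto
  finally show ?thesis .
qed

lemma prod_scaled_factorial_powers:
  fixes C c :: real
  shows "(\<Prod>j<P. C * (c * real (Suc j)) ^ k) = C ^ P * (c ^ P * fact P) ^ k"
proof (induction P)
  case (Suc P)
  have e: "c ^ Suc P * fact (Suc P) = (c ^ P * fact P) * (c * real (Suc P))"
    by (simp add: algebra_simps)
  have "(\<Prod>j<Suc P. C * (c * real (Suc j)) ^ k) = (C ^ P * (c ^ P * fact P) ^ k) * (C * (c * real (Suc P)) ^ k)"
    by (simp only: prod.lessThan_Suc Suc.IH)
  also have "\<dots> = C ^ Suc P * ((c ^ P * fact P) * (c * real (Suc P))) ^ k"
    by (simp only: power_mult_distrib power_Suc ac_simps)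
  finally show ?case by (simp only: e)
qed simp

lemma prod_two_arcs:
  fixes C c K :: real
  assumes PL: "2 * P \<le> L"
  shows "(\<Prod>j<L. if j < P then C * (c * real (Suc j)) ^ k
                  else if L - P \<le> j then C * (c * real (L - j)) ^ k else K)
       = K ^ (L - 2 * P) * (C ^ P * (c ^ P * fact P) ^ k)\<^sup>2"
    (is "prod ?b _ = _")
proof -
  define g where "g j = C * (c * real (Suc j)) ^ k" for j
  have "(\<Prod>j\<in>{0..<P}. ?b j) * (\<Prod>j\<in>{P..<L-P}. ?b j) = (\<Prod>j\<in>{0..<L-P}. ?b j)"
    using PL by (intro prod.atLeastLessThan_concat) auto
  moreover have "(\<Prod>j\<in>{0..<L-P}. ?b j) * (\<Prod>j\<in>{L-P..<L}. ?b j) = (\<Prod>j\<in>{0..<L}. ?b j)"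
    using PL by (intro prod.atLeastLessThan_concat) auto
  ultimately have "(\<Prod>j<L. ?b j) = (\<Prod>j<P. ?b j) * (\<Prod>j\<in>{P..<L-P}. ?b j) * (\<Prod>j\<in>{L-P..<L}. ?b j)"
    by (simp add: atLeast0LessThan)
  also have "(\<Prod>j<P. ?b j) = (\<Prod>j<P. g j)"
    by (intro prod.cong) (auto simp: g_def)
  also have "(\<Prod>j\<in>{P..<L-P}. ?b j) = K ^ (L - 2 * P)"
    by (subst prod.cong[OF refl, of _ _ "\<lambda>_. K"]) (auto simp: mult_2)
  also have "(\<Prod>j\<in>{L-P..<L}. ?b j) = (\<Prod>i\<in>{0..<P}. ?b (i + (L - P)))"
    using prod.shift_bounds_nat_ivl[of ?b 0 "L - P" P] PL by simp
  also have "\<dots> = (\<Prod>i<P. g (P - Suc i))"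
    using PL by (intro prod.cong) (auto simp: g_def atLeast0LessThan Suc_diff_Suc)
  also have "\<dots> = (\<Prod>j<P. g j)" by (rule prod.nat_diff_reindex)
  finally show ?thesis
    by (simp only: g_def prod_scaled_factorial_powers power2_eq_square ac_simps)
qed

text \<open>Rotating by the \<open>L\<close>-th roots of unity puts at most \<open>2P\<close> factors within angle \<open>2\<pi>P/L\<close>
  of 1, on both sides; the \<open>d\<close>-th of them from 1 is bounded via \<open>|1 - w| \<le> 2\<pi>d/L\<close>.\<close>
lemma norm_prod_rotations_le:
  fixes F :: "complex \<Rightarrow> complex" and L P k :: nat and C \<beta> :: real
  assumes F_le: "\<And>w. norm w = 1 \<Longrightarrow> norm (F w) \<le> K"
    and F_near: "\<And>w. norm w = 1 \<Longrightarrow> norm (1 - w) \<le> \<beta> \<Longrightarrow> norm (F w) \<le> C * (norm (1 - w) / \<beta>) ^ k"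
    and C: "0 \<le> C" and \<beta>: "0 < \<beta>" and PL: "2 * P \<le> L" and P\<beta>: "2*pi*P/L \<le> \<beta>"
    and w: "norm w = 1"
  shows "norm (\<Prod>j<L. F (cis (2*pi*j/L) * w))
           \<le> K ^ (L - 2 * P) * (C ^ P * ((2*pi/(L*\<beta>)) ^ P * fact P) ^ k)\<^sup>2"
proof (cases "L = 0")
  case L: False
  define c where "c = 2*pi/(L*\<beta>)"
  obtain t where t: "0 \<le> t" "t < 2*pi/L"
    and arc: "(\<Prod>j<L. F (cis (2*pi*j/L) * w)) = (\<Prod>j<L. F (cis (t + 2*pi*j/L)))"
    using prod_rotations_eq_arc[OF w] L by blast
  have near: "norm (F (cis x)) \<le> C * (c * d) ^ k" if "\<bar>x\<bar> \<le> 2*pi*d/L" "d \<le> P" for x and d :: nat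
  proof -
    have "2*pi*d/L \<le> 2*pi*P/L" using that by (simp add: divide_right_mono)
    then have "norm (F (cis x)) \<le> C * ((2*pi*d/L) / \<beta>) ^ k"
      using norm_cis_near_one_le[OF F_near C \<beta> that(1)] P\<beta> by simp
    then show ?thesis by (simp add: c_def field_simps)
  qed
  have factor: "norm (F (cis (t + 2*pi*j/L)))
      \<le> (if j < P then C * (c * real (Suc j)) ^ k else if L - P \<le> j then C * (c * real (L - j)) ^ k else K)"
    if "j < L" for j
  proof -
    consider "j < P" | "\<not> j < P" "L - P \<le> j" | "\<not> j < P" "\<not> L - P \<le> j" by blast
    then show ?thesis
    proof cases
      case 1
      have "\<bar>t + 2*pi*j/L\<bar> \<le> 2*pi*Suc j/L" using t by (simp add: add_divide_distrib algebra_simps)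
      then show ?thesis using near[of "t + 2*pi*j/L" "Suc j"] 1 by simp
    next
      case 2
      have e: "t - 2*pi*(L - j)/L = (t + 2*pi*j/L) - 2*pi"
        using \<open>j < L\<close> L by (simp add: of_nat_diff field_simps)
      have "cis (t + 2*pi*j/L) = cis (t - 2*pi*(L - j)/L)"
        by (subst e) (simp flip: cis_divide)
      moreover have "\<bar>t - 2*pi*(L - j)/L\<bar> \<le> 2*pi*(L - j)/L"
        using t \<open>j < L\<close> by (auto simp: abs_le_iff divide_right_mono intro: order.trans[of _ "2*pi/L"])
      ultimately show ?thesis using near[of "t - 2*pi*(L - j)/L" "L - j"] 2 \<open>j < L\<close> by simp
    next
      case 3
      then show ?thesis using F_le[of "cis (t + 2*pi*j/L)"] by simp
    qed
  qed
  have "norm (\<Prod>j<L. F (cis (2*pi*j/L) * w)) = (\<Prod>j<L. norm (F (cis (t + 2*pi*j/L))))"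
    by (simp add: arc prod_norm)
  also have "\<dots> \<le> K ^ (L - 2 * P) * (C ^ P * (c ^ P * fact P) ^ k)\<^sup>2"
    unfolding prod_two_arcs[OF PL, symmetric] by (intro prod_mono ballI conjI norm_ge_zero factor) simp
  finally show ?thesis by (simp add: c_def)
qed (use PL in simp)

text \<open>A Borwein-Erdelyi-Kos type argument: the product of the rotations of \<open>moebius_poly\<close>
  is holomorphic on the disc with value \<open>q 0 ^ L\<close> at the centre, so by the maximum modulus
  principle its bound on the unit circle is at least 1.\<close>
lemma one_le_rotated_product_bound:
  fixes q :: "nat \<Rightarrow> int" and H \<sigma> :: real and N k L P :: nat
  assumes H: "\<forall>i. \<bar>of_int (q i)\<bar> \<le> H" and q0: "q 0 \<noteq> 0" and N: "0 < N"
    and \<sigma>: "0 < \<sigma>" "\<sigma> \<le> 1" and vanish: "\<forall>j<k. coeff_at_one q N j = 0"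
    and PL: "2 * P \<le> L" and P\<sigma>: "2*pi*P/L \<le> 4*\<sigma>/5"
  shows "1 \<le> (12*H) ^ (L - 2*P) * ((\<Sum>i<N. \<bar>of_int (q i)\<bar> * (1 + \<sigma>) ^ i) ^ P
                * ((2*pi/(L*(4*\<sigma>/5))) ^ P * fact P) ^ k)\<^sup>2"
    (is "1 \<le> ?B")
proof -
  define C where "C = (\<Sum>i<N. \<bar>real_of_int (q i)\<bar> * (1 + \<sigma>) ^ i)"
  define G where "G w = (\<Prod>j<L. moebius_poly q N (cis (2*pi*j/L) * w))" for w
  have C: "0 \<le> C" unfolding C_def using \<sigma> by (intro sum_nonneg) auto
  have "5 - cis (2*pi*j/L) * w \<noteq> 0" if "w \<in> ball 0 2" for w j
  proof
    assume "5 - cis (2*pi*j/L) * w = 0"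
    then have "norm (cis (2*pi*j/L) * w) = 5" by (simp add: right_minus_eq)
    then show False using that by (simp add: norm_mult)
  qed
  then have hol: "G holomorphic_on ball 0 2"
    unfolding G_def moebius_poly_def ipoly_def by (intro holomorphic_intros) auto
  have "norm (G 0) \<le> ?B"
  proof (rule maximum_modulus_frontier[of G "ball 0 1"])
    show "G holomorphic_on interior (ball 0 1)"
      using hol by (rule holomorphic_on_subset) auto
    show "continuous_on (closure (ball 0 1)) G"
      using holomorphic_on_imp_continuous_on[OF hol] by (rule continuous_on_subset) auto
  next
    fix z :: complex
    assume "z \<in> frontier (ball 0 1)"
    then have z: "norm z = 1" by simp
    show "norm (G z) \<le> ?B"
      unfolding G_def C_def[symmetric]
    proof (rule norm_prod_rotations_le[OF _ _ C _ PL P\<sigma> z])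
      show "norm (moebius_poly q N w) \<le> 12 * H" if "norm w = 1" for w
        using norm_moebius_poly_le[OF that H] .
      show "norm (moebius_poly q N w) \<le> C * (norm (1 - w) / (4*\<sigma>/5)) ^ k"
        if "norm w = 1" "norm (1 - w) \<le> 4*\<sigma>/5" for w
        unfolding C_def by (rule norm_moebius_poly_near_one_le[OF that(1) \<sigma> that(2) vanish])
    qed (use \<sigma> in simp)
  qed simp_all
  moreover have "G 0 = of_int (q 0) ^ L"
    using N by (simp only: G_def mult_zero_right moebius_poly_0 prod_constant card_lessThan)
  then have "1 \<le> norm (G 0)"
    using q0 by (simp add: norm_power one_le_power del: of_int_power)
  ultimately show ?thesis by (rule order_trans[rotated])
qed

lemma exp_one_mult_power_le:
  assumes "1 \<le> P"
  shows "exp 1 * real P ^ (P + 1) \<le> (real P + 1) ^ (P + 1)"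
proof -
  have P: "0 < real P" using assms by simp
  have "ln (real P / (real P + 1)) \<le> real P / (real P + 1) - 1"
    using P by (intro ln_le_minus_one) auto
  also have "\<dots> = - 1 / (real P + 1)" using P by (simp add: field_simps)
  finally have "ln (real P / (real P + 1)) \<le> - 1 / (real P + 1)" .
  moreover have "ln ((real P + 1) / real P) = - ln (real P / (real P + 1))"
    using P by (simp add: ln_div)
  ultimately have "1 / (real P + 1) \<le> ln ((real P + 1) / real P)" by linarith
  then have "1 \<le> (real P + 1) * ln ((real P + 1) / real P)"
    using P by (simp add: field_simps)
  then have "exp 1 \<le> exp (real (P + 1) * ln ((real P + 1) / real P))" by (simp add: add.commute)
  also have "\<dots> = exp (ln ((real P + 1) / real P)) ^ (P + 1)" by (rule exp_of_nat_mult)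
  also have "\<dots> = ((real P + 1) / real P) ^ (P + 1)" using P by simp
  finally show ?thesis using P by (simp add: field_simps power_divide)
qed

lemma fact_le_exp_power:
  assumes "1 \<le> P"
  shows "fact P \<le> exp 1 * real P ^ (P + 1) / exp (real P)"
  using assms
proof (induction P rule: nat_induct_at_least)
  case (Suc P)
  have "fact (Suc P) = real (Suc P) * fact P" by simp
  also have "\<dots> \<le> real (Suc P) * (exp 1 * real P ^ (P + 1) / exp (real P))"
    using Suc by (intro mult_left_mono) auto
  also have "\<dots> \<le> real (Suc P) * ((real P + 1) ^ (P + 1) / exp (real P))"
    using exp_one_mult_power_le[OF Suc(1)] by (intro mult_left_mono divide_right_mono) auto
  also have "\<dots> = exp 1 * real (Suc P) ^ (Suc P + 1) / exp (real (Suc P))"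
    by (simp add: exp_add field_simps)
  finally show ?case .
qed simp

lemma power_mult_fact_le:
  assumes "0 \<le> \<rho>" "\<rho> \<le> 1 / real P" "1 \<le> P"
  shows "\<rho> ^ P * fact P \<le> exp 1 * real P / exp (real P)"
proof -
  have "\<rho> ^ P * fact P \<le> (1 / real P) ^ P * (exp 1 * real P ^ (P + 1) / exp (real P))"
    using assms fact_le_exp_power[OF assms(3)] by (intro mult_mono power_mono) auto
  also have "\<dots> = exp 1 * real P / exp (real P)"
    using assms(3) by (simp add: power_divide)
  finally show ?thesis .
qed

lemma exists_rotation_count:
  fixes \<beta> :: real and P :: nat
  assumes "0 < \<beta>" "\<beta> \<le> pi"
  obtains L :: nat where "2 * P \<le> L" "2*pi*P/L \<le> \<beta>" "real L \<le> 2*pi*P/\<beta> + 1"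
proof
  define L where "L = nat \<lceil>2*pi*P/\<beta>\<rceil>"
  show L: "real L \<le> 2*pi*P/\<beta> + 1"
    using assms by (simp add: L_def of_nat_nat)
  have L': "2*pi*P/\<beta> \<le> real L" unfolding L_def by (rule real_nat_ceiling_ge)
  have "real (2 * P) \<le> 2*pi*P/\<beta>"
    using assms by (simp add: field_simps mult_right_mono)
  with L' show "2 * P \<le> L" by linarith
  show "2*pi*P/L \<le> \<beta>"
  proof (cases "L = 0")
    case False
    then show ?thesis using L' assms by (simp add: field_simps)
  qed (use assms in simp)
qed

lemma one_le_weighted_coeff_sum:
  fixes q :: "nat \<Rightarrow> int" and \<sigma> :: real
  assumes "q 0 \<noteq> 0" "0 < N" "0 \<le> \<sigma>"
  shows "1 \<le> (\<Sum>i<N. \<bar>of_int (q i)\<bar> * (1 + \<sigma>) ^ i)"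
proof -
  have "\<bar>real_of_int (q 0)\<bar> * (1 + \<sigma>) ^ 0 \<le> (\<Sum>i<N. \<bar>of_int (q i)\<bar> * (1 + \<sigma>) ^ i)"
    using assms by (intro member_le_sum) auto
  moreover have "1 \<le> \<bar>real_of_int (q 0)\<bar>" using assms(1) by linarith
  ultimately show ?thesis by simp
qed

lemma one_le_rotated_product_bound_exp:
  fixes q :: "nat \<Rightarrow> int" and H \<sigma> :: real and N k L P :: nat
  assumes H: "\<forall>i. \<bar>of_int (q i)\<bar> \<le> H" and q0: "q 0 \<noteq> 0" and N: "0 < N"
    and \<sigma>: "0 < \<sigma>" "\<sigma> \<le> 1" and vanish: "\<forall>j<k. coeff_at_one q N j = 0"
    and P: "1 \<le> P" and PL: "2 * P \<le> L" and P\<sigma>: "2*pi*P/L \<le> 4*\<sigma>/5"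
  shows "1 \<le> (12*H) ^ (L - 2*P) * ((\<Sum>i<N. \<bar>of_int (q i)\<bar> * (1 + \<sigma>) ^ i) ^ P
                * (exp 1 * real P / exp (real P)) ^ k)\<^sup>2"
proof -
  define C where "C = (\<Sum>i<N. \<bar>real_of_int (q i)\<bar> * (1 + \<sigma>) ^ i)"
  define \<rho> where "\<rho> = 2*pi/(L*(4*\<sigma>/5))"
  have H1: "1 \<le> H" using H[rule_format, of 0] q0 by linarith
  have C1: "1 \<le> C" unfolding C_def using q0 N \<sigma> by (intro one_le_weighted_coeff_sum) auto
  have \<rho>: "0 \<le> \<rho>" using \<sigma> by (simp add: \<rho>_def)
  have "0 < L" using PL P by simp
  then have "2*pi*P \<le> L * (4*\<sigma>/5)" using P\<sigma> by (simp add: field_simps)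
  then have "\<rho> \<le> 2*pi/(2*pi*P)" unfolding \<rho>_def using \<sigma> P \<open>0 < L\<close> by (intro divide_left_mono) auto
  then have "\<rho> ^ P * fact P \<le> exp 1 * real P / exp (real P)"
    using \<rho> P by (intro power_mult_fact_le) auto
  then have "C ^ P * (\<rho> ^ P * fact P) ^ k \<le> C ^ P * (exp 1 * real P / exp (real P)) ^ k"
    using C1 \<rho> by (intro mult_left_mono power_mono) auto
  then have "(C ^ P * (\<rho> ^ P * fact P) ^ k)\<^sup>2 \<le> (C ^ P * (exp 1 * real P / exp (real P)) ^ k)\<^sup>2"
    using C1 \<rho> by (intro power_mono) auto
  then have "(12*H) ^ (L - 2*P) * (C ^ P * (\<rho> ^ P * fact P) ^ k)\<^sup>2
      \<le> (12*H) ^ (L - 2*P) * (C ^ P * (exp 1 * real P / exp (real P)) ^ k)\<^sup>2"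
    using H1 by (intro mult_left_mono) auto
  moreover have "1 \<le> (12*H) ^ (L - 2*P) * (C ^ P * (\<rho> ^ P * fact P) ^ k)\<^sup>2"
    using one_le_rotated_product_bound[OF H q0 N \<sigma> vanish PL P\<sigma>] by (simp add: C_def \<rho>_def)
  ultimately show ?thesis unfolding C_def by linarith
qed

lemma multiplicity_at_one_log_bound:
  fixes q :: "nat \<Rightarrow> int" and H \<sigma> :: real and N k P :: nat
  assumes H: "\<forall>i. \<bar>of_int (q i)\<bar> \<le> H" and q0: "q 0 \<noteq> 0" and N: "0 < N"
    and \<sigma>: "0 < \<sigma>" "\<sigma> \<le> 1" and vanish: "\<forall>j<k. coeff_at_one q N j = 0" and P: "1 \<le> P"
  shows "real k * (real P - 1 - ln (real P))
           \<le> 5*pi*P/(4*\<sigma>) * ln (12*H) + P * ln (\<Sum>i<N. \<bar>of_int (q i)\<bar> * (1 + \<sigma>) ^ i)"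
proof -
  define \<beta> where "\<beta> = 4*\<sigma>/5"
  define C where "C = (\<Sum>i<N. \<bar>real_of_int (q i)\<bar> * (1 + \<sigma>) ^ i)"
  define A where "A = exp 1 * real P / exp (real P)"
  have \<beta>: "0 < \<beta>" "\<beta> \<le> pi" using \<sigma> pi_gt3 by (simp_all add: \<beta>_def)
  obtain L where PL: "2 * P \<le> L" and P\<beta>: "2*pi*P/L \<le> \<beta>" and L: "real L \<le> 2*pi*P/\<beta> + 1"
    using exists_rotation_count[OF \<beta>] .
  have H1: "1 \<le> H" using H[rule_format, of 0] q0 by linarith
  have C1: "1 \<le> C" unfolding C_def using q0 N \<sigma> by (intro one_le_weighted_coeff_sum) auto
  have "1 \<le> (12*H) ^ (L - 2*P) * (C ^ P * A ^ k)\<^sup>2"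
    using one_le_rotated_product_bound_exp[OF H q0 N \<sigma> vanish P PL] P\<beta>
    by (simp add: A_def C_def \<beta>_def)
  then have "0 \<le> ln ((12*H) ^ (L - 2*P) * (C ^ P * A ^ k)\<^sup>2)" by simp
  also have "\<dots> = real (L - 2*P) * ln (12*H) + 2 * (real P * ln C + real k * ln A)"
    using H1 C1 P by (simp add: A_def ln_mult ln_realpow del: ln_mult_pos) (simp add: algebra_simps)
  also have "real (L - 2*P) * ln (12*H) \<le> (2*pi*P/\<beta>) * ln (12*H)"
    using L P PL H1 by (intro mult_right_mono) (auto simp: of_nat_diff)
  also have "ln A = - (real P - 1 - ln (real P))"
    using P by (simp add: A_def ln_mult ln_div)
  finally have "2 * real k * (real P - 1 - ln (real P)) \<le> (2*pi*P/\<beta>) * ln (12*H) + 2 * P * ln C"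
    by (simp add: algebra_simps)
  then show ?thesis by (simp add: \<beta>_def C_def field_simps)
qed

lemma ln_1000_le: "ln (1000::real) \<le> 19"
proof -
  have "(2::real) ^ 19 \<le> exp 1 ^ 19"
    using exp_ge_add_one_self[of 1] by (intro power_mono) auto
  then have "(1000::real) \<le> exp 19" by (simp flip: exp_of_nat_mult)
  then have "ln (1000::real) \<le> ln (exp 19)" by (subst ln_le_cancel_iff) auto
  then show ?thesis by simp
qed

lemma multiplicity_at_one_bound:
  fixes q :: "nat \<Rightarrow> int" and H \<sigma> :: real and N k :: nat
  assumes H: "\<forall>i. \<bar>of_int (q i)\<bar> \<le> H" and q0: "q 0 \<noteq> 0" and N: "0 < N"
    and \<sigma>: "0 < \<sigma>" "\<sigma> \<le> 1" and vanish: "\<forall>j<k. coeff_at_one q N j = 0"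
  shows "real k * (49/50) \<le> 5*pi/(4*\<sigma>) * ln (12*H) + ln (H * N) + N * \<sigma>"
proof -
  define C where "C = (\<Sum>i<N. \<bar>real_of_int (q i)\<bar> * (1 + \<sigma>) ^ i)"
  have H1: "1 \<le> H" using H[rule_format, of 0] q0 by linarith
  have "0 < C" unfolding C_def using one_le_weighted_coeff_sum[of q N \<sigma>] q0 N \<sigma> by fastforce
  moreover have "C \<le> (\<Sum>i<N. H * (1 + \<sigma>) ^ N)"
    unfolding C_def using H \<sigma> by (intro sum_mono mult_mono power_increasing) auto
  ultimately have "ln C \<le> ln (H * N * (1 + \<sigma>) ^ N)" by (simp add: ac_simps)
  also have "\<dots> = ln (H * N) + N * ln (1 + \<sigma>)" using H1 N \<sigma> by (simp add: ln_mult ln_realpow)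
  also have "\<dots> \<le> ln (H * N) + N * \<sigma>"
    using \<sigma> ln_add_one_self_le_self[of \<sigma>] by (intro add_left_mono mult_left_mono) auto
  finally have lnC: "ln C \<le> ln (H * N) + N * \<sigma>" .
  have "real k * (1000 - 1 - 19) \<le> real k * (real 1000 - 1 - ln (real 1000))"
    using ln_1000_le by (intro mult_left_mono) auto
  also have "\<dots> \<le> 5*pi*1000/(4*\<sigma>) * ln (12*H) + 1000 * ln C"
    using multiplicity_at_one_log_bound[OF H q0 N \<sigma> vanish, of 1000] by (simp add: C_def)
  finally have "real k * (49/50) \<le> 5*pi/(4*\<sigma>) * ln (12*H) + ln C" by simp
  then show ?thesis using lnC by linarith
qed

lemma ln_le_half: "0 < (y::real) \<Longrightarrow> ln y \<le> y / 2"
  using ln_le_minus_one[of "y / 2"] ln2_le_25_over_36 by (simp add: ln_div)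

lemma multiplicity_bound_arith:
  fixes x y \<kappa> :: real
  assumes x: "1 \<le> x" and y: "7 \<le> y"
    and \<kappa>: "\<kappa> * (49/50) \<le> 5*pi*y/12 * (ln 96 + 4 * ln x) + (4 * ln 2 + 4 * ln x + 2 * ln y) + 6 * y"
  shows "\<kappa> \<le> 14 * x * y + 9"
proof -
  define z where "z = x * y"
  have ln2: "ln (2::real) \<le> 25/36" by (rule ln2_le_25_over_36)
  have "ln (96::real) \<le> ln (2 ^ 7)" by (subst ln_le_cancel_iff) auto
  also have "\<dots> = 7 * ln 2" using ln_realpow[of "2::real" 7] by simp
  finally have ln96: "ln (96::real) \<le> 7 * ln 2" .
  have lnx: "0 \<le> ln x" "ln x \<le> x - 1" "ln x \<le> x / 2"
    using x ln_le_minus_one[of x] ln_le_half[of x] by auto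
  have lny: "ln y \<le> y / 2" using y ln_le_half[of y] by auto
  have "5*pi/12 \<le> 1309/1000" using pi_approx by simp
  then have "5*pi*y/12 \<le> 1309/1000 * y" using mult_right_mono[of _ _ y] y by fastforce
  then have "5*pi*y/12 * (ln 96 + 4 * ln x) \<le> 1309/1000 * y * (49/10 * x)"
    using ln96 ln2 lnx x y by (intro mult_mono) auto
  also have "\<dots> = 64141/10000 * z" by (simp add: z_def)
  finally have "5*pi*y/12 * (ln 96 + 4 * ln x) \<le> 64141/10000 * z" .
  moreover have "7 * x \<le> z" "y \<le> z"
    using x y mult_left_mono[OF y, of x] by (simp_all add: z_def mult_le_cancel_right1 mult.commute)
  ultimately have "\<kappa> \<le> 14 * z + 9" using \<kappa> ln2 lnx lny by linarith
  then show ?thesis by (simp add: z_def mult.assoc)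
qed

lemma double_le_sqrt_bound:
  assumes "n \<le> 50"
  shows "2 * real n \<le> 14 * sqrt n + 10"
proof -
  have "sqrt (real n) \<le> sqrt 50" using assms by simp
  also have "sqrt (50::real) \<le> 7.1" by (rule real_le_lsqrt) (auto simp: power2_eq_square)
  finally have "sqrt (real n) \<le> 7.1" .
  then have "sqrt (real n) * sqrt (real n) \<le> 7.1 * sqrt (real n)" by (intro mult_right_mono) auto
  then show ?thesis using \<open>sqrt (real n) \<le> 7.1\<close> by simp
qed

lemma multiplicity_at_one_le:
  fixes q :: "nat \<Rightarrow> int" and n k :: nat and W :: real
  assumes W: "1 \<le> W" and H: "\<forall>i. \<bar>of_int (q i)\<bar> \<le> 8 * W" and q0: "q 0 \<noteq> 0" and n: "1 \<le> n"
    and vanish: "\<forall>j<k. coeff_at_one q (2*n) j = 0" and k: "k < 2*n"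
  shows "real k \<le> 14 * W powr (1/4) * sqrt n + 9"
proof -
  define x where "x = W powr (1/4)"
  define y where "y = sqrt n"
  have x: "1 \<le> x" "ln W = 4 * ln x" using W by (simp_all add: x_def ge_one_powr_ge_zero)
  show ?thesis
  proof (cases "n \<le> 50")
    case True
    have "14 * sqrt n \<le> 14 * x * sqrt n" using x by (simp add: mult_le_cancel_right1)
    then show ?thesis using double_le_sqrt_bound[OF True] k unfolding x_def by linarith
  next
    case False
    have y: "7 \<le> y" using False real_sqrt_le_mono[of 49 n] by (simp add: y_def)
    have ny: "real n = y\<^sup>2" by (simp add: y_def)
    define \<sigma> where "\<sigma> = 3 / y"
    have \<sigma>: "0 < \<sigma>" "\<sigma> \<le> 1" using y by (simp_all add: \<sigma>_def)
    have "real k * (49/50) \<le> 5*pi/(4*\<sigma>) * ln (12*(8*W)) + ln (8*W * real (2*n)) + real (2*n) * \<sigma>"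
      using multiplicity_at_one_bound[OF H q0 _ \<sigma> vanish] n by simp
    also have "5*pi/(4*\<sigma>) = 5*pi*y/12" using y by (simp add: \<sigma>_def)
    also have "ln (12*(8*W)) = ln 96 + 4 * ln x" using W x by (simp add: ln_mult)
    also have "ln (8*W * real (2*n)) = 4 * ln 2 + 4 * ln x + 2 * ln y"
    proof -
      have "ln (8*W * real (2*n)) = ln (2 ^ 4) + ln W + ln (y\<^sup>2)"
        using W n y by (simp add: ln_mult ny)
      moreover have "ln (2 ^ 4 :: real) = 4 * ln 2" using ln_realpow[of "2::real" 4] by simp
      ultimately show ?thesis using x y by (simp add: ln_realpow)
    qed
    also have "real (2*n) * \<sigma> = 6 * y" using y by (simp add: \<sigma>_def ny power2_eq_square)
    finally show ?thesis using multiplicity_bound_arith[OF x(1) y] by (simp add: x_def y_def)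
  qed
qed

section \<open>Sign of a polynomial near 1\<close>

lemma taylor_tail_lt:
  fixes q :: "nat \<Rightarrow> int" and N k :: nat and H T s t :: real
  assumes H: "\<forall>i. \<bar>of_int (q i)\<bar> \<le> H"
    and s: "0 < s" "T \<le> s" "T * (H * N * (1 + s) ^ N) < s ^ (k + 1)" and t: "0 < t" "t \<le> T"
  shows "\<bar>\<Sum>j\<in>{Suc k..<N}. of_int (coeff_at_one q N j) * (- t) ^ j\<bar> < t ^ k"
proof -
  define m where "m j = \<bar>real_of_int (coeff_at_one q N j)\<bar>" for j
  have H0: "0 \<le> H" using H by (metis abs_ge_zero order_trans)
  have "\<bar>\<Sum>j\<in>{Suc k..<N}. of_int (coeff_at_one q N j) * (- t) ^ j\<bar> \<le> (\<Sum>j\<in>{Suc k..<N}. m j * t ^ j)"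
    by (rule order_trans[OF sum_abs]) (use t in \<open>simp add: m_def abs_mult power_abs\<close>)
  also have "\<dots> \<le> (\<Sum>j\<in>{Suc k..<N}. (t/s) ^ (k + 1) * (m j * s ^ j))"
  proof (intro sum_mono)
    fix j assume j: "j \<in> {Suc k..<N}"
    have "(t/s) ^ j \<le> (t/s) ^ (k + 1)" using j t s by (intro power_decreasing) auto
    then have "m j * ((t/s) ^ j * s ^ j) \<le> m j * ((t/s) ^ (k + 1) * s ^ j)"
      using s by (intro mult_left_mono mult_right_mono) (auto simp: m_def)
    then show "m j * t ^ j \<le> (t/s) ^ (k + 1) * (m j * s ^ j)"
      using s by (simp add: power_divide ac_simps)
  qed
  also have "\<dots> \<le> (t/s) ^ (k + 1) * (\<Sum>j<N. m j * s ^ j)"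
    unfolding sum_distrib_left[symmetric] using t s
    by (intro mult_left_mono sum_mono2) (auto simp: m_def)
  also have "\<dots> \<le> (t/s) ^ (k + 1) * (\<Sum>i<N. \<bar>of_int (q i)\<bar> * (1 + s) ^ i)"
    using t s unfolding m_def by (intro mult_left_mono sum_abs_coeff_at_one_le) auto
  also have "\<dots> \<le> (t/s) ^ (k + 1) * (\<Sum>i<N. H * (1 + s) ^ N)"
    using t s H by (intro mult_left_mono sum_mono mult_mono power_increasing) auto
  also have "\<dots> = t ^ k * (t * (H * N * (1 + s) ^ N) / s ^ (k + 1))"
    using s by (simp add: power_divide)
  also have "\<dots> < t ^ k * 1"
  proof (rule mult_strict_left_mono)
    have "t * (H * N * (1 + s) ^ N) \<le> T * (H * N * (1 + s) ^ N)"
      using t H0 s by (intro mult_right_mono) auto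
    then show "t * (H * N * (1 + s) ^ N) / s ^ (k + 1) < 1" using s by simp
  qed (use t in simp)
  finally show ?thesis by simp
qed

text \<open>Close to 1 the polynomial is dominated by the first nonvanishing term of its Taylor
  expansion at 1, whose sign is that of \<open>(-1)^k\<close> times the coefficient.\<close>
lemma ipoly_sign_near_one:
  fixes q :: "nat \<Rightarrow> int" and N k :: nat and H T s l :: real
  assumes H: "\<forall>i. \<bar>of_int (q i)\<bar> \<le> H"
    and lowest: "coeff_at_one q N k \<noteq> 0" "\<forall>j<k. coeff_at_one q N j = 0"
    and s: "0 < s" "T \<le> s" "T * (H * N * (1 + s) ^ N) < s ^ (k + 1)" and l: "1 - T \<le> l" "l < 1"
  shows "0 < ipoly q N l * ((-1) ^ k * of_int (coeff_at_one q N k))"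
proof -
  define t where "t = 1 - l"
  define c where "c = real_of_int (coeff_at_one q N k)"
  define R where "R = (\<Sum>j\<in>{Suc k..<N}. of_int (coeff_at_one q N j) * (- t) ^ j)"
  have t: "0 < t" "t \<le> T" using l by (simp_all add: t_def)
  have "k < N" using lowest(1) coeff_at_one_eq_0[of N k q] by (cases "k < N") auto
  have "ipoly q N l = (\<Sum>j<N. of_int (coeff_at_one q N j) * (- t) ^ j)"
    unfolding ipoly_eq_ipoly_coeff_at_one[of q N l] by (simp add: ipoly_def t_def)
  also have "{..<N} = {0..<k} \<union> {k} \<union> {Suc k..<N}" using \<open>k < N\<close> by auto
  also have "(\<Sum>j\<in>{0..<k} \<union> {k} \<union> {Suc k..<N}. of_int (coeff_at_one q N j) * (- t) ^ j) = c * (- t) ^ k + R"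
    using lowest(2) by (simp add: sum.union_disjoint c_def R_def)
  finally have "ipoly q N l * ((-1) ^ k * c) = c * c * t ^ k + R * ((-1) ^ k * c)"
    by (simp add: algebra_simps flip: power_mult_distrib)
  moreover have "\<bar>R * ((-1) ^ k * c)\<bar> < c * c * t ^ k"
  proof -
    have c: "1 \<le> \<bar>c\<bar>" using lowest(1) by (simp add: c_def)
    have "\<bar>R * ((-1) ^ k * c)\<bar> = \<bar>R\<bar> * \<bar>c\<bar>" by (simp add: abs_mult power_abs)
    also have "\<dots> < t ^ k * \<bar>c\<bar>"
      using taylor_tail_lt[OF H s t] c unfolding R_def by (intro mult_strict_right_mono) auto
    also have "\<dots> \<le> t ^ k * (c * c)"
      using t mult_left_mono[OF c, of "\<bar>c\<bar>"] by (intro mult_left_mono) auto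
    finally show ?thesis by (simp add: ac_simps)
  qed
  ultimately show ?thesis by (simp add: c_def)
qed

text \<open>Choices of \<open>s\<close> for the hypothesis of \<open>taylor_tail_lt\<close> with \<open>N = 2n\<close> and
  \<open>T = 1 / (24 W B^E)\<close>, \<open>B = 2n + 1\<close>: \<open>s = (k + 1)/(2n)\<close> when \<open>k\<close> is large and
  \<open>s = B^(-1/2)\<close> otherwise.\<close>
lemma scale_bound_large_k:
  fixes B E s :: real and n k :: nat
  assumes n: "1 \<le> n" and B: "real (2*n) < B" and k: "3 * sqrt B \<le> real (k + 1)"
    and E: "1 + real (k + 1) / 2 \<le> E" and s: "s = real (k + 1) / real (2*n)"
  shows "real (2*n) * (1 + s) ^ (2*n) < 3 * B powr E * s ^ (k + 1)"
proof -
  have B1: "1 \<le> B" "1 \<le> sqrt B" using n B by simp_all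
  have s0: "0 < s" using n by (simp add: s)
  have "(1 + s) ^ (2*n) \<le> exp s ^ (2*n)"
    using s0 by (intro power_mono) (auto simp: add.commute exp_ge_add_one_self)
  also have "\<dots> = exp 1 ^ (k + 1)"
    using n by (simp add: s exp_add flip: exp_of_nat_mult)
  also have "\<dots> \<le> (sqrt B * s) ^ (k + 1)"
  proof (intro power_mono)
    have "exp 1 * real (2*n) \<le> 3 * B" using e_less_272 B by (intro mult_mono) auto
    also have "\<dots> = 3 * sqrt B * sqrt B" using B1 by simp
    also have "\<dots> \<le> real (k + 1) * sqrt B" using k B1 by (intro mult_right_mono) auto
    finally show "exp 1 \<le> sqrt B * s" using n by (simp add: s field_simps)
  qed simp
  finally have Y: "(1 + s) ^ (2*n) \<le> sqrt B ^ (k + 1) * s ^ (k + 1)" by (simp only: power_mult_distrib)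
  have "sqrt B ^ (k + 1) = (B powr (1/2)) ^ (k + 1)" using B1 by (simp add: powr_half_sqrt)
  also have "\<dots> = B powr (real (k + 1) * (1/2))" using B1 by (intro powr_power) auto
  finally have "B * sqrt B ^ (k + 1) = B powr 1 * B powr (real (k + 1) / 2)" using B1 by simp
  also have "\<dots> = B powr (1 + real (k + 1) / 2)" by (rule powr_add[symmetric])
  also have "\<dots> \<le> B powr E" using E B1 by (intro powr_mono) auto
  finally have BE: "B * sqrt B ^ (k + 1) \<le> B powr E" .
  have "real (2*n) * (1 + s) ^ (2*n) \<le> real (2*n) * (sqrt B ^ (k + 1) * s ^ (k + 1))"
    using Y by (intro mult_left_mono) auto
  also have "\<dots> < 3 * B * (sqrt B ^ (k + 1) * s ^ (k + 1))"
    using B s0 B1 by (intro mult_strict_right_mono) auto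
  also have "\<dots> = 3 * ((B * sqrt B ^ (k + 1)) * s ^ (k + 1))" by (simp only: ac_simps)
  also have "\<dots> \<le> 3 * (B powr E * s ^ (k + 1))"
    using BE s0 by (intro mult_left_mono mult_right_mono) auto
  finally show ?thesis by simp
qed

lemma scale_bound_small_k:
  fixes B E s :: real and n k :: nat
  assumes B: "real (2*n) < B" "3 \<le> B" and k: "\<not> 3 * sqrt B \<le> real (k + 1)"
    and E: "1 + sqrt B + 3/2 * sqrt B \<le> E" and s: "s = 1 / sqrt B"
  shows "real (2*n) * (1 + s) ^ (2*n) < 3 * B powr E * s ^ (k + 1)"
proof -
  have B1: "1 \<le> sqrt B" "sqrt B * sqrt B = B" using B by simp_all
  have s0: "0 < s" using B1 by (simp add: s)
  have "(1 + s) ^ (2*n) \<le> exp s ^ (2*n)"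
    using s0 by (intro power_mono) (auto simp: add.commute exp_ge_add_one_self)
  also have "\<dots> = exp (real (2*n) * s)" by (simp flip: exp_of_nat_mult)
  also have "\<dots> \<le> exp (sqrt B)"
    using B B1 s0 by (simp add: s field_simps)
  also have "\<dots> = exp 1 powr sqrt B" by (simp add: exp_powr_real)
  also have "\<dots> \<le> B powr sqrt B" using e_less_272 B by (intro powr_mono2) auto
  finally have Y: "(1 + s) ^ (2*n) \<le> B powr sqrt B" .
  have "B powr (- (1/2)) = s"
    using B by (simp add: s powr_minus powr_half_sqrt inverse_eq_divide)
  then have "s ^ (k + 1) = (B powr (- (1/2))) ^ (k + 1)" by simp
  also have "\<dots> = B powr (real (k + 1) * (- (1/2)))" using B by (intro powr_power) auto
  also have "B powr (- (3/2) * sqrt B) \<le> \<dots>" using k B by (intro powr_mono) auto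
  finally have sk: "B powr (- (3/2) * sqrt B) \<le> s ^ (k + 1)" .
  have "real (2*n) * (1 + s) ^ (2*n) \<le> real (2*n) * B powr sqrt B"
    using Y by (intro mult_left_mono) auto
  also have "\<dots> < 3 * B * B powr sqrt B" using B by (intro mult_strict_right_mono) auto
  also have "\<dots> = 3 * B powr (1 + sqrt B)" using B by (simp add: powr_add)
  also have "\<dots> \<le> 3 * B powr (E + (- (3/2) * sqrt B))" using E B by (intro mult_left_mono powr_mono) auto
  also have "\<dots> = 3 * B powr E * B powr (- (3/2) * sqrt B)" by (simp only: powr_add mult.assoc)
  also have "\<dots> \<le> 3 * B powr E * s ^ (k + 1)" using sk by (intro mult_left_mono) auto
  finally show ?thesis .
qed

text \<open>The theorem's \<open>\<lambda>\<^sub>0\<close> is \<open>1 - sign_threshold n W\<close>.\<close>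
definition sign_threshold :: "nat \<Rightarrow> real \<Rightarrow> real" where
  "sign_threshold n W = 1 / (24 * W * real (2*n + 1) powr (7 * W powr (1/4) * sqrt n + 6))"

lemma sign_threshold_pos_lt_one:
  assumes "1 \<le> n" "1 \<le> W"
  shows "0 < sign_threshold n W" "sign_threshold n W < 1"
proof -
  define X where "X = real (2*n + 1) powr (7 * W powr (1/4) * sqrt n + 6)"
  have "1 \<le> X" unfolding X_def using assms by (intro ge_one_powr_ge_zero) auto
  then have "1 * 1 \<le> W * X" using assms by (intro mult_mono) auto
  then have "1 < 24 * W * X" by linarith
  then show "0 < sign_threshold n W" "sign_threshold n W < 1" by (simp_all add: sign_threshold_def X_def)
qed

lemma sign_threshold_le_inverse:
  assumes n: "1 \<le> n" and W: "1 \<le> W"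
  shows "sign_threshold n W \<le> 1 / real (2*n + 1)"
proof -
  define B where "B = real (2*n + 1)"
  define E where "E = 7 * W powr (1/4) * sqrt n + 6"
  have "1 * 1 \<le> W powr (1/4) * sqrt n" using n W by (intro mult_mono) (auto simp: ge_one_powr_ge_zero)
  then have "B powr 1 \<le> B powr E" by (intro powr_mono) (auto simp: B_def E_def)
  then have "B \<le> 24 * W * B powr E" using W mult_mono[of 1 "24 * W" B "B powr E"] by (simp add: B_def)
  then show ?thesis by (simp add: sign_threshold_def B_def E_def divide_left_mono)
qed

lemma sqrt_double_plus_one_le: "sqrt (2 * real n + 1) \<le> 283/200 * sqrt n + 1"
proof (rule real_le_lsqrt)
  have "(283/200 * sqrt n + 1)\<^sup>2 = 80089/40000 * real n + 283/100 * sqrt n + 1"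
    by (simp add: power2_eq_square algebra_simps)
  then show "2 * real n + 1 \<le> (283/200 * sqrt n + 1)\<^sup>2" using real_sqrt_ge_zero[of n] by linarith
qed simp_all

lemma exists_sign_scale:
  fixes n k :: nat and W :: real
  assumes n: "1 \<le> n" and W: "1 \<le> W" and k: "real k \<le> 14 * W powr (1/4) * sqrt n + 9"
  obtains s where "0 < s" "sign_threshold n W \<le> s"
    "sign_threshold n W * (8 * W * real (2*n) * (1 + s) ^ (2*n)) < s ^ (k + 1)"
proof -
  note result = that
  define B where "B = real (2*n + 1)"
  define E where "E = 7 * W powr (1/4) * sqrt n + 6"
  have B: "real (2*n) < B" "3 \<le> B" using n by (simp_all add: B_def)
  have admissible: thesis
    if "0 < s" "1 / B \<le> s" "real (2*n) * (1 + s) ^ (2*n) < 3 * B powr E * s ^ (k + 1)" for s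
  proof (rule result)
    show "0 < s" "sign_threshold n W \<le> s"
      using that sign_threshold_le_inverse[OF n W] by (simp_all add: B_def)
    show "sign_threshold n W * (8 * W * real (2*n) * (1 + s) ^ (2*n)) < s ^ (k + 1)"
      using that(3) W B by (simp add: sign_threshold_def B_def E_def field_simps)
  qed
  show thesis
  proof (cases "3 * sqrt B \<le> real (k + 1)")
    case True
    define s where "s = real (k + 1) / real (2*n)"
    have E: "1 + real (k + 1) / 2 \<le> E" using k by (simp add: E_def)
    have "1 / B \<le> 1 / real (2*n)" using B n by (intro divide_left_mono) auto
    also have "\<dots> \<le> s" unfolding s_def using n by (intro divide_right_mono) auto
    finally show thesis
      using admissible[of s] scale_bound_large_k[OF n B(1) True E s_def] n by (simp add: s_def)
  next
    case False
    define s where "s = 1 / sqrt B"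
    have "sqrt B \<le> 283/200 * sqrt n + 1" using sqrt_double_plus_one_le[of n] by (simp add: B_def add.commute)
    moreover have "sqrt n \<le> W powr (1/4) * sqrt n" using W by (simp add: ge_one_powr_ge_zero mult_le_cancel_right1)
    ultimately have E: "1 + sqrt B + 3/2 * sqrt B \<le> E"
      unfolding E_def using real_sqrt_ge_zero[of n] by linarith
    have "sqrt B \<le> B" using B mult_left_mono[of 1 "sqrt B" "sqrt B"] by simp
    then have "1 / B \<le> s" unfolding s_def using B by (intro divide_left_mono) auto
    then show thesis
      using admissible[of s] scale_bound_small_k[OF B False E s_def] B by (simp add: s_def)
  qed
qed

lemma ipoly_shift:
  fixes c :: "nat \<Rightarrow> int" and x :: "'a::comm_ring_1"
  assumes "\<forall>i<s. c i = 0"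
  shows "ipoly c N x = x ^ s * ipoly (\<lambda>i. if i + s < N then c (i + s) else 0) N x"
proof (cases "s \<le> N")
  case True
  have "ipoly c N x = (\<Sum>i\<in>{s..<N}. of_int (c i) * x ^ i)"
    unfolding ipoly_def using assms by (intro sum.mono_neutral_right) auto
  also have "\<dots> = (\<Sum>i\<in>{0..<N-s}. of_int (c (i + s)) * x ^ (i + s))"
    using True sum.shift_bounds_nat_ivl[of "\<lambda>i. of_int (c i) * x ^ i" 0 s "N - s"] by simp
  also have "\<dots> = (\<Sum>i<N. of_int (if i + s < N then c (i + s) else 0) * x ^ (i + s))"
    by (intro sum.mono_neutral_cong_left) auto
  finally show ?thesis
    by (simp add: ipoly_def sum_distrib_left power_add algebra_simps)
next
  case False
  then show ?thesis using assms by (simp add: ipoly_def)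
qed

lemma ipoly_sgn_constant_near_one_nonzero_0:
  fixes q :: "nat \<Rightarrow> int" and n :: nat and W :: real
  assumes n: "1 \<le> n" and W: "1 \<le> W" and H: "\<forall>i. \<bar>of_int (q i)\<bar> \<le> 8 * W" and q0: "q 0 \<noteq> 0"
  obtains m where "\<forall>l. 1 - sign_threshold n W \<le> l \<and> l < 1 \<longrightarrow> sgn (ipoly q (2*n) l :: real) = m"
proof -
  obtain j where "coeff_at_one q (2*n) j \<noteq> 0"
    using exists_coeff_at_one_nonzero[of 0 "2*n" q] n q0 by auto
  define k where "k = (LEAST j. coeff_at_one q (2*n) j \<noteq> 0)"
  have lowest: "coeff_at_one q (2*n) k \<noteq> 0" "\<forall>j<k. coeff_at_one q (2*n) j = 0"
    unfolding k_def using \<open>coeff_at_one q (2*n) j \<noteq> 0\<close> by (rule LeastI) (use not_less_Least in blast)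
  have "k < 2*n" using lowest(1) coeff_at_one_eq_0[of "2*n" k q] by (cases "k < 2*n") auto
  then have "real k \<le> 14 * W powr (1/4) * sqrt n + 9"
    using multiplicity_at_one_le[OF W H q0 n lowest(2)] by simp
  then obtain s where s: "0 < s" "sign_threshold n W \<le> s"
    "sign_threshold n W * (8 * W * real (2*n) * (1 + s) ^ (2*n)) < s ^ (k + 1)"
    using exists_sign_scale[OF n W] by blast
  have sgn_eq: "sgn a = sgn b" if "0 < a * b" for a b :: real
    using that by (auto simp: zero_less_mult_iff)
  have "sgn (ipoly q (2*n) l) = sgn ((-1) ^ k * real_of_int (coeff_at_one q (2*n) k))"
    if "1 - sign_threshold n W \<le> l" "l < 1" for l :: real
    using ipoly_sign_near_one[OF H lowest s that] by (rule sgn_eq)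
  then show thesis using that by blast
qed

lemma ipoly_sgn_constant_near_one:
  fixes c :: "nat \<Rightarrow> int" and n :: nat and W :: real
  assumes n: "1 \<le> n" and W: "1 \<le> W" and H: "\<forall>i. \<bar>of_int (c i)\<bar> \<le> 8 * W"
  obtains m where "\<forall>l. 1 - sign_threshold n W \<le> l \<and> l < 1 \<longrightarrow> sgn (ipoly c (2*n) l :: real) = m"
proof (cases "\<forall>i<2*n. c i = 0")
  case True
  then have "ipoly c (2*n) l = 0" for l :: real by (simp add: ipoly_def)
  then show thesis using that by auto
next
  case False
  define s where "s = (LEAST i. c i \<noteq> 0)"
  define q where "q i = (if i + s < 2*n then c (i + s) else 0)" for i
  obtain j where j: "j < 2*n" "c j \<noteq> 0" using False by auto
  have below: "c s \<noteq> 0" "\<forall>i<s. c i = 0"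
    unfolding s_def using j(2) by (rule LeastI) (use not_less_Least in blast)
  have "s < 2*n" using Least_le[of "\<lambda>i. c i \<noteq> 0" j] j unfolding s_def by simp
  with below have q: "q 0 \<noteq> 0" "\<forall>i. \<bar>of_int (q i)\<bar> \<le> 8 * W" using H W by (simp_all add: q_def)
  obtain m where m: "\<forall>l. 1 - sign_threshold n W \<le> l \<and> l < 1 \<longrightarrow> sgn (ipoly q (2*n) l :: real) = m"
    using ipoly_sgn_constant_near_one_nonzero_0[OF n W q(2) q(1)] .
  have shift: "ipoly c (2*n) l = l ^ s * ipoly q (2*n) l" for l :: real
    unfolding q_def[abs_def] by (rule ipoly_shift[OF below(2)])
  have "0 < 1 - sign_threshold n W" using sign_threshold_pos_lt_one[OF n W] by simp
  then have "sgn (ipoly c (2*n) l :: real) = m" if "1 - sign_threshold n W \<le> l" "l < 1" for l :: real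
    using m that by (simp add: shift sgn_mult)
  then show thesis using that by blast
qed

section \<open>Discounted payoffs of positional plays\<close>

lemma funpow_eventually_periodic:
  assumes V: "finite V" "f ` V \<subseteq> V" and v: "v \<in> V"
  obtains a b where "0 < b" "a + b \<le> card V" "\<forall>i\<ge>a. (f ^^ (i + b)) v = (f ^^ i) v"
proof -
  have "(f ^^ i) v \<in> V" for i by (induction i) (use V v in auto)
  then have "\<not> inj_on (\<lambda>i. (f ^^ i) v) {..card V}"
    using card_inj_on_le[of "\<lambda>i. (f ^^ i) v" "{..card V}" V] V by auto
  then obtain a c where ac: "a < c" "c \<le> card V" "(f ^^ a) v = (f ^^ c) v"
    by (auto simp: inj_on_def) (metis linorder_neqE_nat)
  have "(f ^^ (i + (c - a))) v = (f ^^ i) v" if "a \<le> i" for i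
  proof -
    have "i + (c - a) = (i - a) + c" using that ac by simp
    then have "(f ^^ (i + (c - a))) v = (f ^^ (i - a)) ((f ^^ c) v)" by (simp add: funpow_add)
    also have "\<dots> = (f ^^ ((i - a) + a)) v" by (simp add: ac(3) funpow_add)
    also have "\<dots> = (f ^^ i) v" using that by simp
    finally show ?thesis .
  qed
  then show thesis using that[of "c - a" a] ac by auto
qed

lemma play_edge_in_E:
  assumes game: "turn_game V V1 V2 E" and \<sigma>: "positional_strategy E V1 \<sigma>"
    and \<tau>: "positional_strategy E V2 \<tau>" and v: "v \<in> V"
  shows "(play V1 \<sigma> \<tau> v i, play V1 \<sigma> \<tau> v (Suc i)) \<in> E"
proof -
  define f where "f x = (if x \<in> V1 then \<sigma> x else \<tau> x)" for x
  have edge: "(x, f x) \<in> E" if "x \<in> V" for x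
    using that game \<sigma> \<tau> by (auto simp: f_def turn_game_def positional_strategy_def)
  then have "f ` V \<subseteq> V" using game by (auto simp: turn_game_def)
  then have "(f ^^ i) v \<in> V" by (induction i) (use v in auto)
  then show ?thesis using edge by (simp add: play_def f_def[abs_def])
qed

lemma play_eventually_periodic:
  assumes game: "turn_game V V1 V2 E" and \<sigma>: "positional_strategy E V1 \<sigma>"
    and \<tau>: "positional_strategy E V2 \<tau>" and v: "v \<in> V"
  obtains a b where "0 < b" "a + b \<le> card V"
    "\<forall>i\<ge>a. play V1 \<sigma> \<tau> v (i + b) = play V1 \<sigma> \<tau> v i"
proof -
  define f where "f x = (if x \<in> V1 then \<sigma> x else \<tau> x)" for x
  have "f ` V \<subseteq> V"
    using game \<sigma> \<tau> by (auto simp: f_def turn_game_def positional_strategy_def)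
  then show thesis
    using funpow_eventually_periodic[of V f v] game v that
    by (auto simp: play_def f_def[abs_def] turn_game_def)
qed

definition delay :: "nat \<Rightarrow> (nat \<Rightarrow> int) \<Rightarrow> nat \<Rightarrow> int" where
  "delay b d i = (if b \<le> i then d (i - b) else 0)"

text \<open>The coefficients of \<open>(1 - x^b\<^sub>1) (1 - x^b\<^sub>2) \<Sum>\<^sub>i d\<^sub>i x^i\<close>.\<close>
definition diff_delays :: "nat \<Rightarrow> nat \<Rightarrow> (nat \<Rightarrow> int) \<Rightarrow> nat \<Rightarrow> int" where
  "diff_delays b1 b2 d i = d i - delay b1 d i - delay b2 d i + delay (b1 + b2) d i"

lemma summable_discounted_bounded:
  fixes l :: real and d :: "nat \<Rightarrow> int"
  assumes l: "0 \<le> l" "l < 1" and d: "\<forall>i. \<bar>d i\<bar> \<le> M"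
  shows "summable (\<lambda>i. l ^ i * of_int (d i))"
proof (rule summable_comparison_test')
  show "summable (\<lambda>i. of_int M * l ^ i)" using l by (intro summable_mult summable_geometric) auto
  fix i
  have "norm (l ^ i * of_int (d i)) = l ^ i * \<bar>of_int (d i)\<bar>" using l by (simp add: abs_mult)
  also have "\<dots> \<le> l ^ i * of_int M" using d l by (intro mult_left_mono) (auto simp flip: of_int_abs)
  finally show "norm (l ^ i * of_int (d i)) \<le> of_int M * l ^ i" by (simp add: mult.commute)
qed

lemma sums_delay:
  fixes l :: real and d :: "nat \<Rightarrow> int"
  assumes l: "0 \<le> l" "l < 1" and d: "\<forall>i. \<bar>d i\<bar> \<le> M"
  shows "(\<lambda>i. l ^ i * of_int (delay b d i)) sums (l ^ b * (\<Sum>i. l ^ i * of_int (d i)))"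
proof -
  define f where "f i = l ^ i * of_int (delay b d i)" for i
  have "(\<lambda>i. l ^ b * (l ^ i * of_int (d i))) sums (l ^ b * (\<Sum>i. l ^ i * of_int (d i)))"
    by (intro sums_mult summable_sums summable_discounted_bounded[OF l d])
  moreover have "(\<lambda>i. f (i + b)) = (\<lambda>i. l ^ b * (l ^ i * of_int (d i)))"
    by (auto simp: f_def delay_def power_add)
  ultimately have "(\<lambda>i. f (i + b)) sums (l ^ b * (\<Sum>i. l ^ i * of_int (d i)))" by simp
  moreover have "(\<Sum>i<b. f i) = 0" by (simp add: f_def delay_def)
  ultimately have "f sums (l ^ b * (\<Sum>i. l ^ i * of_int (d i)))" by (simp add: sums_iff_shift)
  then show ?thesis by (simp only: f_def[abs_def])
qed

lemma sums_diff_delays: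
  fixes l :: real and d :: "nat \<Rightarrow> int"
  assumes l: "0 \<le> l" "l < 1" and d: "\<forall>i. \<bar>d i\<bar> \<le> M"
  shows "(\<lambda>i. l ^ i * of_int (diff_delays b1 b2 d i))
           sums ((1 - l ^ b1) * (1 - l ^ b2) * (\<Sum>i. l ^ i * of_int (d i)))"
proof -
  define S where "S = (\<Sum>i. l ^ i * of_int (d i))"
  have "(\<lambda>i. l ^ i * of_int (d i) - l ^ i * of_int (delay b1 d i) - l ^ i * of_int (delay b2 d i)
           + l ^ i * of_int (delay (b1 + b2) d i)) sums (S - l ^ b1 * S - l ^ b2 * S + l ^ (b1 + b2) * S)"
    unfolding S_def
    by (intro sums_add sums_diff sums_delay[OF l d] summable_sums summable_discounted_bounded[OF l d])
  then show ?thesis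
    by (simp add: S_def diff_delays_def power_add algebra_simps)
qed

lemma diff_delays_eq_0:
  assumes p1: "\<forall>i\<ge>a1. e1 (i + b1) = e1 i" and p2: "\<forall>i\<ge>a2. e2 (i + b2) = e2 i"
    and n: "a1 + b1 \<le> n" "a2 + b2 \<le> n" and i: "2 * n \<le> i"
  shows "diff_delays b1 b2 (\<lambda>j. e1 j - e2 j) i = 0"
proof -
  have "e1 i = e1 (i - b1)" "e1 (i - b2) = e1 (i - (b1 + b2))"
    using p1[rule_format, of "i - b1"] p1[rule_format, of "i - (b1 + b2)"] n i by simp_all
  moreover have "e2 i = e2 (i - b2)" "e2 (i - b1) = e2 (i - (b1 + b2))"
    using p2[rule_format, of "i - b2"] p2[rule_format, of "i - (b1 + b2)"] n i by (simp_all add: add.commute)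
  ultimately show ?thesis using n i by (simp add: diff_delays_def delay_def)
qed

lemma abs_diff_delays_le:
  assumes "\<forall>j. \<bar>d j\<bar> \<le> D"
  shows "\<bar>diff_delays b1 b2 d i\<bar> \<le> 4 * D"
proof -
  have delay: "\<bar>delay b d i\<bar> \<le> D" for b using assms by (auto simp: delay_def)
  show ?thesis
    using delay[of b1] delay[of b2] delay[of "b1 + b2"] assms[rule_format, of i]
    unfolding diff_delays_def by linarith
qed

lemma discounted_diff_eq_ipoly:
  fixes l :: real and e1 e2 :: "nat \<Rightarrow> int"
  assumes l: "0 \<le> l" "l < 1" and W: "\<forall>i. \<bar>e1 i\<bar> \<le> W" "\<forall>i. \<bar>e2 i\<bar> \<le> W"
    and p1: "\<forall>i\<ge>a1. e1 (i + b1) = e1 i" and p2: "\<forall>i\<ge>a2. e2 (i + b2) = e2 i"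
    and n: "a1 + b1 \<le> n" "a2 + b2 \<le> n"
  shows "(1 - l ^ b1) * (1 - l ^ b2) * ((\<Sum>i. l ^ i * of_int (e1 i)) - (\<Sum>i. l ^ i * of_int (e2 i)))
           = ipoly (diff_delays b1 b2 (\<lambda>j. e1 j - e2 j)) (2 * n) l"
proof -
  define c where "c = diff_delays b1 b2 (\<lambda>j. e1 j - e2 j)"
  have "\<forall>j. \<bar>e1 j - e2 j\<bar> \<le> 2 * W"
  proof
    fix j show "\<bar>e1 j - e2 j\<bar> \<le> 2 * W" using W(1)[rule_format, of j] W(2)[rule_format, of j] by arith
  qed
  then have "(\<lambda>i. l ^ i * of_int (c i))
      sums ((1 - l ^ b1) * (1 - l ^ b2) * (\<Sum>i. l ^ i * of_int (e1 i - e2 i)))"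
    unfolding c_def by (rule sums_diff_delays[OF l])
  moreover have "(\<Sum>i. l ^ i * of_int (e1 i - e2 i))
      = (\<Sum>i. l ^ i * of_int (e1 i)) - (\<Sum>i. l ^ i * of_int (e2 i))"
    using summable_discounted_bounded[OF l W(1)] summable_discounted_bounded[OF l W(2)]
    by (simp add: suminf_diff right_diff_distrib)
  moreover have "(\<lambda>i. l ^ i * of_int (c i)) sums (\<Sum>i<2 * n. l ^ i * of_int (c i))"
    by (rule sums_finite) (use diff_delays_eq_0[OF p1 p2 n] in \<open>auto simp: c_def\<close>)
  then have "(\<lambda>i. l ^ i * of_int (c i)) sums ipoly c (2 * n) l"
    by (simp add: ipoly_def mult.commute)
  ultimately show ?thesis by (simp add: c_def sums_unique2)
qed

lemma sgn_disc_diff_eq_sgn_ipoly: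
  fixes r :: "'v \<times> 'v \<Rightarrow> int" and W :: int
  assumes game: "turn_game V V1 V2 E" and W: "\<forall>e\<in>E. \<bar>r e\<bar> \<le> W" and v: "v \<in> V"
    and s1: "positional_strategy E V1 \<sigma>1" and t1: "positional_strategy E V2 \<tau>1"
    and s2: "positional_strategy E V1 \<sigma>2" and t2: "positional_strategy E V2 \<tau>2"
  obtains c where "\<forall>i. \<bar>c i\<bar> \<le> 8 * W"
    "\<forall>l. 0 < l \<and> l < 1 \<longrightarrow> sgn (Disc l r (play V1 \<sigma>1 \<tau>1 v) - Disc l r (play V1 \<sigma>2 \<tau>2 v))
                              = sgn (ipoly c (2 * card V) l)"
proof -
  define e1 where "e1 i = r (play V1 \<sigma>1 \<tau>1 v i, play V1 \<sigma>1 \<tau>1 v (Suc i))" for i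
  define e2 where "e2 i = r (play V1 \<sigma>2 \<tau>2 v i, play V1 \<sigma>2 \<tau>2 v (Suc i))" for i
  obtain a1 b1 where L1: "0 < b1" "a1 + b1 \<le> card V" "\<forall>i\<ge>a1. e1 (i + b1) = e1 i"
    using play_eventually_periodic[OF game s1 t1 v] by (metis (no_types) add_Suc e1_def le_SucI)
  obtain a2 b2 where L2: "0 < b2" "a2 + b2 \<le> card V" "\<forall>i\<ge>a2. e2 (i + b2) = e2 i"
    using play_eventually_periodic[OF game s2 t2 v] by (metis (no_types) add_Suc e2_def le_SucI)
  have e: "\<forall>i. \<bar>e1 i\<bar> \<le> W" "\<forall>i. \<bar>e2 i\<bar> \<le> W"
    using W play_edge_in_E[OF game s1 t1 v] play_edge_in_E[OF game s2 t2 v] by (auto simp: e1_def e2_def)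
  define c where "c = diff_delays b1 b2 (\<lambda>j. e1 j - e2 j)"
  have "\<forall>j. \<bar>e1 j - e2 j\<bar> \<le> 2 * W"
  proof
    fix j show "\<bar>e1 j - e2 j\<bar> \<le> 2 * W" using e(1)[rule_format, of j] e(2)[rule_format, of j] by arith
  qed
  then have "\<forall>i. \<bar>c i\<bar> \<le> 8 * W"
    unfolding c_def using abs_diff_delays_le[of "\<lambda>j. e1 j - e2 j" "2 * W"] by simp
  moreover have "sgn (Disc l r (play V1 \<sigma>1 \<tau>1 v) - Disc l r (play V1 \<sigma>2 \<tau>2 v)) = sgn (ipoly c (2 * card V) l)"
    if l: "0 < l" "l < 1" for l :: real
  proof -
    have "Disc l r (play V1 \<sigma>1 \<tau>1 v) = (\<Sum>i. l ^ i * of_int (e1 i))"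
      "Disc l r (play V1 \<sigma>2 \<tau>2 v) = (\<Sum>i. l ^ i * of_int (e2 i))"
      by (simp_all add: Disc_def e1_def e2_def)
    then have "sgn ((1 - l ^ b1) * (1 - l ^ b2) * (Disc l r (play V1 \<sigma>1 \<tau>1 v) - Disc l r (play V1 \<sigma>2 \<tau>2 v)))
        = sgn (ipoly c (2 * card V) l)"
      using discounted_diff_eq_ipoly[OF _ l(2) e L1(3) L2(3) L1(2) L2(2)] l by (simp add: c_def)
    moreover have "0 < (1 - l ^ b1) * (1 - l ^ b2)"
      using l L1(1) L2(1) by (simp add: power_less_one_iff)
    ultimately show ?thesis by (metis mult_1 sgn_mult sgn_pos)
  qed
  ultimately show thesis using that by blast
qed

theorem lemma5p3:
  fixes V V1 V2 :: "'v set" and E :: "('v \<times> 'v) set" and r :: "'v \<times> 'v \<Rightarrow> int"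
    and \<sigma>1 \<tau>1 \<sigma>2 \<tau>2 :: "'v \<Rightarrow> 'v" and v :: 'v and n :: nat and W :: int and lam0 :: real
  assumes game: "turn_game V V1 V2 E"
    and n_def: "n = card V"
    and W_def: "W = Max ((\<lambda>e. \<bar>r e\<bar>) ` E)"
    and W_ge: "W \<ge> 1"
    and v: "v \<in> V"
    and s1: "positional_strategy E V1 \<sigma>1" and t1: "positional_strategy E V2 \<tau>1"
    and s2: "positional_strategy E V1 \<sigma>2" and t2: "positional_strategy E V2 \<tau>2"
    and lam0_def: "lam0 = 1 - 1 / (24 * real_of_int W *
        real (2 * n + 1) powr (7 * real_of_int W powr (1/4) * sqrt (real n) + 6))"
    and ge0: "Disc lam0 r (play V1 \<sigma>1 \<tau>1 v) \<ge> Disc lam0 r (play V1 \<sigma>2 \<tau>2 v)"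
  shows "\<forall>lam. lam0 \<le> lam \<and> lam < 1 \<longrightarrow>
           Disc lam r (play V1 \<sigma>1 \<tau>1 v) \<ge> Disc lam r (play V1 \<sigma>2 \<tau>2 v)"
proof (intro allI impI)
  fix lam assume lam: "lam0 \<le> lam \<and> lam < 1"
  define diff where "diff l = Disc l r (play V1 \<sigma>1 \<tau>1 v) - Disc l r (play V1 \<sigma>2 \<tau>2 v)" for l
  have "finite E" using game finite_subset[of E "V \<times> V"] by (auto simp: turn_game_def)
  then have "\<forall>e\<in>E. \<bar>r e\<bar> \<le> W" unfolding W_def by auto
  then obtain c where c: "\<forall>i. \<bar>c i\<bar> \<le> 8 * W"
    and sgn_diff: "\<forall>l. 0 < l \<and> l < 1 \<longrightarrow> sgn (diff l) = sgn (ipoly c (2 * n) l)"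
    using sgn_disc_diff_eq_sgn_ipoly[OF game _ v s1 t1 s2 t2] unfolding diff_def n_def by blast
  have n: "1 \<le> n" using game v by (auto simp: n_def turn_game_def Suc_le_eq card_gt_0_iff)
  have W: "1 \<le> real_of_int W" using W_ge by simp
  have "\<forall>i. \<bar>of_int (c i)\<bar> \<le> 8 * real_of_int W"
    using c by (metis of_int_abs of_int_le_iff of_int_mult of_int_numeral)
  then obtain m where m: "\<forall>l. 1 - sign_threshold n W \<le> l \<and> l < 1 \<longrightarrow> sgn (ipoly c (2 * n) l :: real) = m"
    using ipoly_sgn_constant_near_one[OF n W] by blast
  have lam0: "lam0 = 1 - sign_threshold n W" by (simp add: lam0_def sign_threshold_def)
  then have "0 < lam0" using sign_threshold_pos_lt_one[OF n W] by simp
  then have "sgn (diff lam) = sgn (diff lam0)" using lam lam0 sgn_diff m by auto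
  then show "Disc lam r (play V1 \<sigma>2 \<tau>2 v) \<le> Disc lam r (play V1 \<sigma>1 \<tau>1 v)"
    using ge0 by (auto simp: diff_def sgn_if split: if_splits)
qed

end
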